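(* Let $A$ be any of $L_d$, $C_d$ ($d\in\{2,3,\dots\}$), or $L_\infty$, and let $p\in[1,\infty)\setminus\{2\}$. Then there exists an injective free spatial representation of $A$ on $l^p(\mathbb{Z}_{>0})$.
   Context: $L_d$ is the universal complex unital algebra generated by $s_1,\dots,s_d,t_1,\dots,t_d$ with $t_js_j=1$, $t_js_k=0$ ($j\ne k$), $\sum_js_jt_j=1$; $C_d$ has the same generators with only $t_js_j=1$, $t_js_k=0$ ($j\ne k$); $L_\infty$ is on $s_1,s_2,\dots,t_1,t_2,\dots$ with $t_js_j=1$, $t_js_k=0$ ($j\ne k$). A representation is a unital algebra homomorphism into $L(E)$. A representation $\rho$ on $L^p(X,\mu)$ is free if there is a measurable partition $X=\coprod_{m\in\mathbb{Z}}E_m$ with $\rho(s_j)(L^p(E_m,\mu))\subset L^p(E_{m+1},\mu)$ and $\rho(t_j)(L^p(E_m,\mu))\subset L^p(E_{m-1},\mu)$ for all $m$ and $j$ (here $L^p(E,\mu)$ is the subspace of functions vanishing off $E$). $\rho$ is spatial if each $\rho(s_j)$, $\rho(t_j)$ is a spatial partial isometry with $\rho(t_j)$ the reverse of $\rho(s_j)$. Spatial partial isometries: Let $(X,\mathcal{B},\mu)$, $(Y,\mathcal{C},\nu)$ be $\sigma$-finite measure spaces, $\mathcal{N}(\mu)$ the $\mu$-null sets, $\mathcal{B}/\mathcal{N}(\mu)$ the Boolean $\sigma$-algebra of measurable sets modulo null sets. A measurable set transformation is a map $S\colon\mathcal{B}/\mathcal{N}(\mu)\to\mathcal{C}/\mathcal{N}(\nu)$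 which is a Boolean algebra homomorphism preserving countable unions; it induces a unique linear map $S_*$ on measurable functions mod a.e. equality with $S_*(\chi_E)=\chi_{S(E)}$ preserving a.e. limits of sequences; for bijective $S$, $S_*(\mu)(F)=\mu(E)$ when $S([E])=[F]$. A spatial system is $(E,F,S,g)$ with $E\in\mathcal{B}$, $F\in\mathcal{C}$, $S$ a bijective measurable set transformation from $(E,\mu|_E)$ to $(F,\nu|_F)$, $g$ measurable on $F$ with $|g|=1$ a.e.; the associated spatial partial isometry is $(s\xi)(y)=g(y)[\tfrac{dS_*(\mu|_E)}{d\nu|_F}(y)]^{1/p}S_*(\xi|_E)(y)$ on $F$ and $0$ off $F$; its reverse has spatial system $(F,E,S^{-1},(S^{-1})_*(g)^{-1})$. *)

theory Defs
  imports Complex_Main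
begin

text \<open>We index Z_{>0} by nat via n |-> n+1. A vector is a function nat => complex;
  l^p is the set of p-summable ones (counting measure).\<close>

definition lp :: "real \<Rightarrow> (nat \<Rightarrow> complex) set" where
  "lp p = {\<xi>. summable (\<lambda>n. norm (\<xi> n) powr p)}"

definition lp_norm :: "real \<Rightarrow> (nat \<Rightarrow> complex) \<Rightarrow> real" where
  "lp_norm p \<xi> = (\<Sum>n. norm (\<xi> n) powr p) powr (1 / p)"

type_synonym op = "(nat \<Rightarrow> complex) \<Rightarrow> (nat \<Rightarrow> complex)"

text \<open>Bounded linear operators on l^p (only their behaviour on l^p matters).\<close>
definition bounded_op :: "real \<Rightarrow> op \<Rightarrow> bool" where
  "bounded_op p A \<longleftrightarrow>
     (\<forall>\<xi>\<in>lp p. A \<xi> \<in> lp p) \<and>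
     (\<forall>\<xi>\<in>lp p. \<forall>\<eta>\<in>lp p. \<forall>c::complex.
         A (\<lambda>n. c * \<xi> n + \<eta> n) = (\<lambda>n. c * A \<xi> n + A \<eta> n)) \<and>
     (\<exists>C. \<forall>\<xi>\<in>lp p. lp_norm p (A \<xi>) \<le> C * lp_norm p \<xi>)"

datatype gen = S nat | T nat

datatype alg = Ld nat | Cd nat | Linf

fun idx :: "alg \<Rightarrow> nat set" where
  "idx (Ld d) = {1..d}"
| "idx (Cd d) = {1..d}"
| "idx Linf = {1..}"

definition gens :: "alg \<Rightarrow> gen set" where
  "gens A = S ` idx A \<union> T ` idx A"

text \<open>Noncommutative polynomials in the free unital algebra: finitely supported
  coefficient functions on words.\<close>
type_synonym ncpoly = "gen list \<Rightarrow> complex"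

definition ncpoly_over :: "gen set \<Rightarrow> ncpoly \<Rightarrow> bool" where
  "ncpoly_over G P \<longleftrightarrow> finite {w. P w \<noteq> 0} \<and> (\<forall>w. P w \<noteq> 0 \<longrightarrow> set w \<subseteq> G)"

definition mono :: "complex \<Rightarrow> gen list \<Rightarrow> ncpoly" where
  "mono c w = (\<lambda>u. if u = w then c else 0)"

definition ncmult :: "ncpoly \<Rightarrow> ncpoly \<Rightarrow> ncpoly" where
  "ncmult P Q = (\<lambda>w. \<Sum>i\<in>{0..length w}. P (take i w) * Q (drop i w))"

text \<open>Defining relations of each algebra, as polynomials required to vanish.\<close>
definition rels :: "alg \<Rightarrow> ncpoly set" where
  "rels A =
     {(\<lambda>u. mono 1 [T j, S j] u - mono 1 [] u) | j. j \<in> idx A} \<union>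
     {mono 1 [T j, S k] | j k. j \<in> idx A \<and> k \<in> idx A \<and> j \<noteq> k} \<union>
     (case A of Ld d \<Rightarrow>
        {(\<lambda>u. (\<Sum>j\<in>{1..d}. mono 1 [S j, T j] u) - mono 1 [] u)}
      | _ \<Rightarrow> {})"

inductive_set ideal_gen :: "gen set \<Rightarrow> ncpoly set \<Rightarrow> ncpoly set" for G R where
  zero: "(\<lambda>_. 0) \<in> ideal_gen G R"
| base: "r \<in> R \<Longrightarrow> r \<in> ideal_gen G R"
| add: "P \<in> ideal_gen G R \<Longrightarrow> Q \<in> ideal_gen G R \<Longrightarrow> (\<lambda>w. P w + Q w) \<in> ideal_gen G R"
| lmult: "P \<in> ideal_gen G R \<Longrightarrow> set w \<subseteq> G \<Longrightarrow> ncmult (mono c w) P \<in> ideal_gen G R"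
| rmult: "P \<in> ideal_gen G R \<Longrightarrow> set w \<subseteq> G \<Longrightarrow> ncmult P (mono 1 w) \<in> ideal_gen G R"

text \<open>A representation is given by the images of the generators; the induced
  unital homomorphism evaluates noncommutative polynomials.\<close>
definition word_op :: "(gen \<Rightarrow> op) \<Rightarrow> gen list \<Rightarrow> op" where
  "word_op \<rho> w = foldr (\<lambda>g f. \<rho> g \<circ> f) w id"

definition nc_eval :: "(gen \<Rightarrow> op) \<Rightarrow> ncpoly \<Rightarrow> op" where
  "nc_eval \<rho> P = (\<lambda>\<xi> n. \<Sum>w\<in>{w. P w \<noteq> 0}. P w * word_op \<rho> w \<xi> n)"

definition is_rep :: "real \<Rightarrow> alg \<Rightarrow> (gen \<Rightarrow> op) \<Rightarrow> bool" where
  "is_rep p A \<rho> \<longleftrightarrow> (\<forall>g\<in>gens A. bounded_op p (\<rho> g)) \<and>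
     (\<forall>r\<in>rels A. \<forall>\<xi>\<in>lp p. nc_eval \<rho> r \<xi> = (\<lambda>_. 0))"

text \<open>Injectivity of the induced homomorphism A -> L(l^p): the kernel of the
  evaluation on the free algebra is exactly the ideal of relations.\<close>
definition injective_rep :: "real \<Rightarrow> alg \<Rightarrow> (gen \<Rightarrow> op) \<Rightarrow> bool" where
  "injective_rep p A \<rho> \<longleftrightarrow> (\<forall>P. ncpoly_over (gens A) P \<longrightarrow>
      (\<forall>\<xi>\<in>lp p. nc_eval \<rho> P \<xi> = (\<lambda>_. 0)) \<longrightarrow> P \<in> ideal_gen (gens A) (rels A))"

text \<open>Free: a partition of the index set into E_m (m \<in> Z), shifted by s_j and t_j.
  All subsets are measurable for counting measure.\<close>
definition free_rep :: "real \<Rightarrow> alg \<Rightarrow> (gen \<Rightarrow> op) \<Rightarrow> bool" where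
  "free_rep p A \<rho> \<longleftrightarrow> (\<exists>E :: int \<Rightarrow> nat set.
     (\<forall>m m'. m \<noteq> m' \<longrightarrow> E m \<inter> E m' = {}) \<and> (\<Union>m. E m) = UNIV \<and>
     (\<forall>j\<in>idx A. \<forall>m. \<forall>\<xi>\<in>lp p. (\<forall>x. x \<notin> E m \<longrightarrow> \<xi> x = 0) \<longrightarrow>
        (\<forall>x. x \<notin> E (m + 1) \<longrightarrow> \<rho> (S j) \<xi> x = 0) \<and>
        (\<forall>x. x \<notin> E (m - 1) \<longrightarrow> \<rho> (T j) \<xi> x = 0)))"

text \<open>For counting measure on nat, the only null set is empty, so B/N(mu) is the
  power set. A bijective measurable set transformation from E to F is a bijective
  Boolean sigma-homomorphism Pow E -> Pow F.\<close>
definition set_transf_bij :: "nat set \<Rightarrow> nat set \<Rightarrow> (nat set \<Rightarrow> nat set) \<Rightarrow> bool" where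
  "set_transf_bij E F St \<longleftrightarrow>
     bij_betw St (Pow E) (Pow F) \<and>
     (\<forall>A\<subseteq>E. St (E - A) = F - St A) \<and>
     (\<forall>A B. A \<subseteq> E \<longrightarrow> B \<subseteq> E \<longrightarrow> St (A \<inter> B) = St A \<inter> St B) \<and>
     (\<forall>Af :: nat \<Rightarrow> nat set. (\<forall>n. Af n \<subseteq> E) \<longrightarrow> St (\<Union>n. Af n) = (\<Union>n. St (Af n)))"

text \<open>The induced map St_* on functions: it sends chi_{x} to chi_{St {x}}, so
  (St_* f)(y) = f(x) where St {x} = {y}.\<close>
definition pushfwd :: "nat set \<Rightarrow> (nat set \<Rightarrow> nat set) \<Rightarrow> (nat \<Rightarrow> 'a) \<Rightarrow> nat \<Rightarrow> 'a" where
  "pushfwd E St f y = f (THE x. x \<in> E \<and> St {x} = {y})"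

text \<open>Radon-Nikodym derivative of St_*(mu|E) w.r.t. counting measure on F at y:
  St_*(mu)({y}) = mu(St^{-1}{y}).\<close>
definition rn_deriv :: "nat set \<Rightarrow> (nat set \<Rightarrow> nat set) \<Rightarrow> nat \<Rightarrow> real" where
  "rn_deriv E St y = real (card (inv_into (Pow E) St {y}))"

definition spatial_pi :: "real \<Rightarrow> nat set \<Rightarrow> nat set \<Rightarrow> (nat set \<Rightarrow> nat set) \<Rightarrow>
    (nat \<Rightarrow> complex) \<Rightarrow> op" where
  "spatial_pi p E F St g \<xi> y =
     (if y \<in> F then g y * complex_of_real (rn_deriv E St y powr (1 / p)) *
        pushfwd E St (\<lambda>x. if x \<in> E then \<xi> x else 0) y
      else 0)"

definition spatial_system :: "nat set \<Rightarrow> nat set \<Rightarrow> (nat set \<Rightarrow> nat set) \<Rightarrow>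
    (nat \<Rightarrow> complex) \<Rightarrow> bool" where
  "spatial_system E F St g \<longleftrightarrow> set_transf_bij E F St \<and> (\<forall>y\<in>F. norm (g y) = 1)"

text \<open>s is spatial with system (E,F,St,g) and t is its reverse, whose system is
  (F, E, St^{-1}, ((St^{-1})_* g)^{-1}); equalities are as operators on l^p.\<close>
definition spatial_pair :: "real \<Rightarrow> op \<Rightarrow> op \<Rightarrow> bool" where
  "spatial_pair p s t \<longleftrightarrow> (\<exists>E F St g. spatial_system E F St g \<and>
     (\<forall>\<xi>\<in>lp p. s \<xi> = spatial_pi p E F St g \<xi>) \<and>
     (\<forall>\<xi>\<in>lp p. t \<xi> = spatial_pi p F E (inv_into (Pow E) St)
         (\<lambda>x. inverse (pushfwd F (inv_into (Pow E) St) g x)) \<xi>))"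

definition spatial_rep :: "real \<Rightarrow> alg \<Rightarrow> (gen \<Rightarrow> op) \<Rightarrow> bool" where
  "spatial_rep p A \<rho> \<longleftrightarrow> (\<forall>j\<in>idx A. spatial_pair p (\<rho> (S j)) (\<rho> (T j)))"

definition valid_alg :: "alg \<Rightarrow> bool" where
  "valid_alg A \<longleftrightarrow> (case A of Ld d \<Rightarrow> d \<ge> 2 | Cd d \<Rightarrow> d \<ge> 2 | Linf \<Rightarrow> True)"

end

theory Submission
  imports Defs "HOL-Library.Nat_Bijection"
begin

(* The representation is built from a "branching system" on the index set: injections
   sig_j with pairwise disjoint ranges (covering everything for L_d), a level function
   raised by one by every sig_j, and a separating point.  Then s_j \<xi> = \<xi> \<circ> sig_j^{-1}
   on range sig_j (zero elsewhere) and t_j \<xi> = \<xi> \<circ> sig_j are spatial partial isometries,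
   t_j being the reverse of s_j; they satisfy the relations, and the level sets witness
   freeness.

   Injectivity is the heart of the proof.  Modulo the ideal of relations every polynomial
   reduces to a combination of normal words s_\<mu> t_\<nu>^* (for L_d: \<mu>, \<nu> not both ending
   in 1).  Such a combination cannot act as zero: evaluated at the point masses reached
   from the separating point along \<mu>_0 and \<nu>_0, for a normal word of least T-length in
   the support, only that word contributes.

   The construction works for every p > 0. *)

section \<open>Noncommutative polynomials and the ideal of relations\<close>

definition supp :: "ncpoly \<Rightarrow> gen list set" where
  "supp P = {w. P w \<noteq> 0}"

lemma supp_mono_one [simp]: "supp (mono 1 w) = {w}"
  by (auto simp: supp_def mono_def)

lemma ncmult_mono_left:
  "ncmult (mono c w) P v = (if take (length w) v = w then c * P (drop (length w) v) else 0)"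
proof -
  define f where "f i = mono c w (take i v) * P (drop i v)" for i
  have off_diag: "f i = 0" if "i \<noteq> length w" "i \<le> length v" for i
  proof -
    have "take i v \<noteq> w" using that by (metis length_take min.absorb2)
    then show ?thesis unfolding f_def mono_def by simp
  qed
  have "ncmult (mono c w) P v = sum f {0..length v}" unfolding ncmult_def f_def by simp
  also have "\<dots> = (if take (length w) v = w then c * P (drop (length w) v) else 0)"
  proof (cases "length w \<le> length v")
    case True
    then have "sum f {0..length v} = f (length w)"
      using sum.mono_neutral_right[of "{0..length v}" "{length w}" f] off_diag by auto
    then show ?thesis unfolding f_def mono_def by simp
  next
    case False
    then show ?thesis using off_diag by (auto intro: sum.neutral)
  qed
  finally show ?thesis .
qed

lemma ncmult_mono_right:
  "ncmult P (mono c w) v = (if drop (length v - length w) v = w then P (take (length v - length w) v) * c else 0)"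
proof -
  define f where "f i = P (take i v) * mono c w (drop i v)" for i
  have off_diag: "f i = 0" if "i \<noteq> length v - length w" "i \<le> length v" for i
  proof -
    have "drop i v \<noteq> w" using that by auto
    then show ?thesis unfolding f_def mono_def by simp
  qed
  have "ncmult P (mono c w) v = sum f {0..length v}" unfolding ncmult_def f_def by simp
  also have "\<dots> = f (length v - length w)"
    using sum.mono_neutral_right[of "{0..length v}" "{length v - length w}" f] off_diag by auto
  also have "\<dots> = (if drop (length v - length w) v = w then P (take (length v - length w) v) * c else 0)"
    unfolding f_def mono_def by simp
  finally show ?thesis .
qed

lemma ncmult_mono_mono: "ncmult (mono a u) (mono b v) = mono (a * b) (u @ v)"
proof
  fix x
  have "take (length u) x = u \<and> drop (length u) x = v \<longleftrightarrow> x = u @ v"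
    by (metis append_eq_conv_conj)
  then show "ncmult (mono a u) (mono b v) x = mono (a * b) (u @ v) x"
    unfolding ncmult_mono_left by (auto simp: mono_def)
qed

lemma ncmult_diff_left: "ncmult (\<lambda>v. P v - Q v) R = (\<lambda>w. ncmult P R w - ncmult Q R w)"
  by (rule ext) (simp add: ncmult_def left_diff_distrib sum_subtractf)

lemma ncmult_diff_right: "ncmult R (\<lambda>v. P v - Q v) = (\<lambda>w. ncmult R P w - ncmult R Q w)"
  by (rule ext) (simp add: ncmult_def right_diff_distrib sum_subtractf)

lemma ncmult_sum_left: "ncmult (\<lambda>v. \<Sum>j\<in>F. P j v) R = (\<lambda>w. \<Sum>j\<in>F. ncmult (P j) R w)"
  by (rule ext) (simp add: ncmult_def sum_distrib_right sum.swap[of _ F])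

lemma ncmult_sum_right: "ncmult R (\<lambda>v. \<Sum>j\<in>F. P j v) = (\<lambda>w. \<Sum>j\<in>F. ncmult R (P j) w)"
  by (rule ext) (simp add: ncmult_def sum_distrib_left sum.swap[of _ F])

lemma ideal_gen_smult:
  assumes "P \<in> ideal_gen G R"
  shows "(\<lambda>v. c * P v) \<in> ideal_gen G R"
proof -
  have "ncmult (mono c []) P = (\<lambda>v. c * P v)"
    by (rule ext) (simp add: ncmult_mono_left)
  then show ?thesis using ideal_gen.lmult[OF assms, of "[]" c] by simp
qed

lemma S_in_gens [simp]: "S j \<in> gens A \<longleftrightarrow> j \<in> idx A"
  and T_in_gens [simp]: "T j \<in> gens A \<longleftrightarrow> j \<in> idx A"
  by (auto simp: gens_def)

abbreviation rel_ideal :: "alg \<Rightarrow> ncpoly set" where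
  "rel_ideal A \<equiv> ideal_gen (gens A) (rels A)"

lemma rel_ideal_sandwich:
  "r \<in> rels A \<Longrightarrow> set u \<subseteq> gens A \<Longrightarrow> set v \<subseteq> gens A \<Longrightarrow>
   ncmult (mono 1 u) (ncmult r (mono 1 v)) \<in> rel_ideal A"
  by (intro ideal_gen.lmult ideal_gen.rmult ideal_gen.base)

lemma rel_ideal_TS_same:
  assumes "j \<in> idx A" "set u \<subseteq> gens A" "set v \<subseteq> gens A"
  shows "(\<lambda>x. mono 1 (u @ [T j, S j] @ v) x - mono 1 (u @ v) x) \<in> rel_ideal A"
proof -
  have "(\<lambda>x. mono 1 [T j, S j] x - mono 1 [] x) \<in> rels A"
    using assms unfolding rels_def by blast
  from rel_ideal_sandwich[OF this assms(2,3)] show ?thesis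
    by (simp add: ncmult_diff_left ncmult_diff_right ncmult_mono_mono)
qed

lemma rel_ideal_TS_other:
  assumes "j \<in> idx A" "k \<in> idx A" "j \<noteq> k" "set u \<subseteq> gens A" "set v \<subseteq> gens A"
  shows "mono 1 (u @ [T j, S k] @ v) \<in> rel_ideal A"
proof -
  have "mono 1 [T j, S k] \<in> rels A"
    using assms unfolding rels_def by blast
  from rel_ideal_sandwich[OF this assms(4,5)] show ?thesis
    by (simp add: ncmult_mono_mono)
qed

lemma rel_ideal_ST_sum:
  assumes "set u \<subseteq> gens (Ld d)" "set v \<subseteq> gens (Ld d)"
  shows "(\<lambda>x. (\<Sum>j\<in>{1..d}. mono 1 (u @ [S j, T j] @ v) x) - mono 1 (u @ v) x) \<in> rel_ideal (Ld d)"
proof -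
  have "(\<lambda>x. (\<Sum>j\<in>{1..d}. mono 1 [S j, T j] x) - mono 1 [] x) \<in> rels (Ld d)"
    unfolding rels_def by simp
  from rel_ideal_sandwich[OF this assms] show ?thesis
    by (simp add: ncmult_diff_left ncmult_diff_right ncmult_mono_mono ncmult_sum_left ncmult_sum_right)
qed

lemma finite_supp_diff:
  "finite (supp P) \<Longrightarrow> finite (supp Q) \<Longrightarrow> finite (supp (\<lambda>v. P v - Q v))"
  by (auto simp: supp_def intro: finite_subset[of _ "supp P \<union> supp Q"])

lemma finite_supp_sum:
  "finite F \<Longrightarrow> (\<And>j. j \<in> F \<Longrightarrow> finite (supp (P j))) \<Longrightarrow> finite (supp (\<lambda>v. \<Sum>j\<in>F. P j v))"
proof (induction F rule: finite_induct)
  case (insert k F)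
  have "supp (\<lambda>v. \<Sum>j\<in>insert k F. P j v) \<subseteq> supp (P k) \<union> supp (\<lambda>v. \<Sum>j\<in>F. P j v)"
    using insert.hyps by (auto simp: supp_def)
  then show ?case using insert by (auto intro: finite_subset)
qed (simp add: supp_def)

lemma supp_ncmult_mono_left: "supp (ncmult (mono c w) P) \<subseteq> (\<lambda>u. w @ u) ` supp P"
proof
  fix v assume "v \<in> supp (ncmult (mono c w) P)"
  then have v: "take (length w) v = w" "P (drop (length w) v) \<noteq> 0"
    by (auto simp: supp_def ncmult_mono_left split: if_splits)
  then have "v = w @ drop (length w) v" by (metis append_take_drop_id)
  then show "v \<in> (\<lambda>u. w @ u) ` supp P" using v(2) by (auto simp: supp_def)
qed

lemma supp_ncmult_mono_right: "supp (ncmult P (mono c w)) \<subseteq> (\<lambda>u. u @ w) ` supp P"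
proof
  fix v assume "v \<in> supp (ncmult P (mono c w))"
  then have v: "drop (length v - length w) v = w" "P (take (length v - length w) v) \<noteq> 0"
    by (auto simp: supp_def ncmult_mono_right split: if_splits)
  then have "v = take (length v - length w) v @ w" by (metis append_take_drop_id)
  then show "v \<in> (\<lambda>u. u @ w) ` supp P" using v(2) by (auto simp: supp_def)
qed

lemma rels_cases:
  assumes "r \<in> rels A"
  obtains (TS_same) j where "j \<in> idx A" "r = (\<lambda>u. mono 1 [T j, S j] u - mono 1 [] u)"
    | (TS_other) j k where "j \<in> idx A" "k \<in> idx A" "j \<noteq> k" "r = mono 1 [T j, S k]"
    | (ST_sum) d where "A = Ld d" "r = (\<lambda>u. (\<Sum>j\<in>{1..d}. mono 1 [S j, T j] u) - mono 1 [] u)"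
  using assms unfolding rels_def by (cases A) auto

lemma rels_finite_supp: "r \<in> rels A \<Longrightarrow> finite (supp r)"
  by (erule rels_cases) (auto intro!: finite_supp_diff finite_supp_sum)

lemma ideal_gen_finite_supp:
  assumes "\<And>r. r \<in> R \<Longrightarrow> finite (supp r)" and "P \<in> ideal_gen G R"
  shows "finite (supp P)"
  using assms(2)
proof induction
  case (add P Q)
  then show ?case by (auto simp: supp_def intro: finite_subset[of _ "supp P \<union> supp Q"])
next
  case (lmult P w c)
  then show ?case using finite_subset[OF supp_ncmult_mono_left] by blast
next
  case (rmult P w)
  then show ?case using finite_subset[OF supp_ncmult_mono_right] by blast
next
  case (base r)
  then show ?case by (rule assms(1))
qed (simp add: supp_def)

section \<open>Reduction to normal words\<close>

text \<open>Normal words s_\<mu> t_\<nu>^* are encoded by the pair (\<mu>, \<nu>), the word being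
  map S \<mu> @ map T (rev \<nu>).  In L_d the words with \<mu> and \<nu> both ending in 1 are
  excluded, since s_1 t_1 can be eliminated using the relation \<Sum>_j s_j t_j = 1.\<close>
definition normal_pair :: "alg \<Rightarrow> nat list \<Rightarrow> nat list \<Rightarrow> bool" where
  "normal_pair A \<mu> \<nu> \<longleftrightarrow>
     (case A of Ld d \<Rightarrow> \<not> (\<mu> \<noteq> [] \<and> \<nu> \<noteq> [] \<and> last \<mu> = 1 \<and> last \<nu> = 1) | _ \<Rightarrow> True)"

definition normal_word :: "alg \<Rightarrow> gen list \<Rightarrow> bool" where
  "normal_word A v \<longleftrightarrow> (\<exists>\<mu> \<nu>. v = map S \<mu> @ map T (rev \<nu>) \<and>
     set \<mu> \<subseteq> idx A \<and> set \<nu> \<subseteq> idx A \<and> normal_pair A \<mu> \<nu>)"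

definition reduces :: "alg \<Rightarrow> ncpoly \<Rightarrow> bool" where
  "reduces A P \<longleftrightarrow> (\<exists>Q. finite (supp Q) \<and> (\<forall>v\<in>supp Q. normal_word A v) \<and>
     (\<lambda>v. P v - Q v) \<in> rel_ideal A)"

lemma reduces_normal_word: "normal_word A w \<Longrightarrow> reduces A (mono 1 w)"
  unfolding reduces_def using ideal_gen.zero by (intro exI[of _ "mono 1 w"]) simp

lemma reduces_zero: "reduces A (\<lambda>_. 0)"
  unfolding reduces_def using ideal_gen.zero by (intro exI[of _ "\<lambda>_. 0"]) (simp add: supp_def)

lemma reduces_congr:
  assumes "reduces A P" and "(\<lambda>v. P' v - P v) \<in> rel_ideal A"
  shows "reduces A P'"
proof -
  obtain Q where Q: "finite (supp Q)" "\<forall>v\<in>supp Q. normal_word A v" "(\<lambda>v. P v - Q v) \<in> rel_ideal A"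
    using assms(1) unfolding reduces_def by blast
  have "(\<lambda>v. (P' v - P v) + (P v - Q v)) \<in> rel_ideal A"
    using ideal_gen.add[OF assms(2) Q(3)] .
  then show ?thesis unfolding reduces_def using Q(1,2) by (intro exI[of _ Q]) simp
qed

lemma reduces_add:
  assumes "reduces A P" and "reduces A P'"
  shows "reduces A (\<lambda>v. P v + P' v)"
proof -
  obtain Q where Q: "finite (supp Q)" "\<forall>v\<in>supp Q. normal_word A v" "(\<lambda>v. P v - Q v) \<in> rel_ideal A"
    using assms(1) unfolding reduces_def by blast
  obtain Q' where Q': "finite (supp Q')" "\<forall>v\<in>supp Q'. normal_word A v" "(\<lambda>v. P' v - Q' v) \<in> rel_ideal A"
    using assms(2) unfolding reduces_def by blast
  have supp_sum: "supp (\<lambda>v. Q v + Q' v) \<subseteq> supp Q \<union> supp Q'"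
    by (auto simp: supp_def)
  have "(\<lambda>v. (P v - Q v) + (P' v - Q' v)) \<in> rel_ideal A"
    using ideal_gen.add[OF Q(3) Q'(3)] .
  then have "(\<lambda>v. (P v + P' v) - (Q v + Q' v)) \<in> rel_ideal A"
    by (simp add: algebra_simps)
  then show ?thesis unfolding reduces_def using Q Q' supp_sum
    by (intro exI[of _ "\<lambda>v. Q v + Q' v"]) (auto intro: finite_subset)
qed

lemma reduces_smult:
  assumes "reduces A P"
  shows "reduces A (\<lambda>v. c * P v)"
proof -
  obtain Q where Q: "finite (supp Q)" "\<forall>v\<in>supp Q. normal_word A v" "(\<lambda>v. P v - Q v) \<in> rel_ideal A"
    using assms unfolding reduces_def by blast
  have supp_smult: "supp (\<lambda>v. c * Q v) \<subseteq> supp Q"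
    by (auto simp: supp_def)
  have "(\<lambda>v. c * P v - c * Q v) \<in> rel_ideal A"
    using ideal_gen_smult[OF Q(3), of c] by (simp add: algebra_simps)
  then show ?thesis unfolding reduces_def using Q supp_smult
    by (intro exI[of _ "\<lambda>v. c * Q v"]) (auto intro: finite_subset)
qed

lemma reduces_diff: "reduces A P \<Longrightarrow> reduces A P' \<Longrightarrow> reduces A (\<lambda>v. P v - P' v)"
  using reduces_add[OF _ reduces_smult[of A P' "-1"], of P] by simp

lemma reduces_sum:
  "finite F \<Longrightarrow> (\<And>j. j \<in> F \<Longrightarrow> reduces A (P j)) \<Longrightarrow> reduces A (\<lambda>v. \<Sum>j\<in>F. P j v)"
  by (induction F rule: finite_induct) (simp_all add: reduces_zero reduces_add)

text \<open>In L_d the word s_\<mu> s_1 t_1 t_\<nu>^* is rewritten as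
  s_\<mu> t_\<nu>^* - \<Sum>_{j\<ge>2} s_\<mu> s_j t_j t_\<nu>^*, whose new terms are normal.\<close>
lemma reduces_Ld_eliminate_ST:
  assumes \<mu>: "set \<mu> \<subseteq> {1..d}" and \<nu>: "set \<nu> \<subseteq> {1..d}"
    and d: "1 \<le> d" and red: "reduces (Ld d) (mono 1 (map S \<mu> @ map T \<nu>))"
  shows "reduces (Ld d) (mono 1 (map S \<mu> @ [S 1, T 1] @ map T \<nu>))"
proof -
  let ?u = "map S \<mu>" and ?v = "map T \<nu>"
  have normal: "normal_word (Ld d) (?u @ [S j, T j] @ ?v)" if j: "j \<in> {2..d}" for j
  proof -
    have "?u @ [S j, T j] @ ?v = map S (\<mu> @ [j]) @ map T (rev (rev \<nu> @ [j]))" by simp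
    moreover have "normal_pair (Ld d) (\<mu> @ [j]) (rev \<nu> @ [j])"
      using j by (simp add: normal_pair_def)
    ultimately show ?thesis unfolding normal_word_def using \<mu> \<nu> j by fastforce
  qed
  have red': "reduces (Ld d) (\<lambda>x. mono 1 (?u @ ?v) x - (\<Sum>j\<in>{2..d}. mono 1 (?u @ [S j, T j] @ ?v) x))"
    using normal by (intro reduces_diff[OF red] reduces_sum reduces_normal_word) auto
  have "(\<Sum>j\<in>{1..d}. mono 1 (?u @ [S j, T j] @ ?v) x) =
      mono 1 (?u @ [S 1, T 1] @ ?v) x + (\<Sum>j\<in>{2..d}. mono 1 (?u @ [S j, T j] @ ?v) x)" for x
    using d by (simp add: sum.atLeast_Suc_atMost numeral_2_eq_2)
  then have "(\<lambda>x. mono 1 (?u @ [S 1, T 1] @ ?v) x -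
        (mono 1 (?u @ ?v) x - (\<Sum>j\<in>{2..d}. mono 1 (?u @ [S j, T j] @ ?v) x)))
      = (\<lambda>x. (\<Sum>j\<in>{1..d}. mono 1 (?u @ [S j, T j] @ ?v) x) - mono 1 (?u @ ?v) x)"
    by (simp add: algebra_simps)
  also have "\<dots> \<in> rel_ideal (Ld d)"
    by (rule rel_ideal_ST_sum) (use \<mu> \<nu> in auto)
  finally show ?thesis using reduces_congr[OF red'] by simp
qed

lemma no_TS_factor:
  "\<not> (\<exists>u v j k. w = u @ [T j, S k] @ v) \<Longrightarrow> \<exists>\<mu> \<nu>. w = map S \<mu> @ map T \<nu>"
proof (induction w)
  case Nil
  show ?case by (intro exI[of _ "[]"]) simp
next
  case (Cons g w)
  have "\<not> (\<exists>u v j k. w = u @ [T j, S k] @ v)"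
  proof
    assume "\<exists>u v j k. w = u @ [T j, S k] @ v"
    then obtain u v j k where "g # w = (g # u) @ [T j, S k] @ v" by auto
    then show False using Cons.prems by blast
  qed
  then obtain \<mu> \<nu> where w: "w = map S \<mu> @ map T \<nu>" using Cons.IH by blast
  show ?case
  proof (cases g)
    case (S j)
    then have "g # w = map S (j # \<mu>) @ map T \<nu>" using w by simp
    then show ?thesis by blast
  next
    case (T j)
    show ?thesis
    proof (cases \<mu>)
      case Nil
      then have "g # w = map S [] @ map T (j # \<nu>)" using w T by simp
      then show ?thesis by blast
    next
      case (Cons m \<mu>')
      then have "g # w = [] @ [T j, S m] @ (map S \<mu>' @ map T \<nu>)" using w T by simp
      then show ?thesis using Cons.prems by blast
    qed
  qed
qed

lemma reduces_TS_factor: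
  assumes jk: "j \<in> idx A" "k \<in> idx A" and u: "set u \<subseteq> gens A" and v: "set v \<subseteq> gens A"
    and red: "reduces A (mono 1 (u @ v))"
  shows "reduces A (mono 1 (u @ [T j, S k] @ v))"
proof (cases "j = k")
  case True
  from reduces_congr[OF red rel_ideal_TS_same[OF jk(1) u v]] show ?thesis using True by simp
next
  case False
  have "(\<lambda>x. mono 1 (u @ [T j, S k] @ v) x - 0) \<in> rel_ideal A"
    using rel_ideal_TS_other[OF jk False u v] by simp
  from reduces_congr[OF reduces_zero this] show ?thesis by simp
qed

lemma not_normal_ST_word:
  assumes "\<not> normal_pair A \<mu> (rev \<nu>)"
  obtains d \<mu>' \<nu>' where "A = Ld d" "\<mu> = \<mu>' @ [1]" "\<nu> = 1 # \<nu>'"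
proof -
  obtain d where A: "A = Ld d" and ne: "\<mu> \<noteq> []" "\<nu> \<noteq> []" and one: "last \<mu> = 1" "hd \<nu> = 1"
    using assms unfolding normal_pair_def by (cases A) (auto simp: last_rev)
  show ?thesis
    using that[OF A] ne one by (metis append_butlast_last_id list.collapse)
qed

text \<open>Every word reduces, by induction on its length: factors t_j s_k are removed, and in
  L_d a factor s_1 t_1 in the middle of a word s_\<mu> t_\<nu> is eliminated.\<close>
lemma reduces_word: "set w \<subseteq> gens A \<Longrightarrow> reduces A (mono 1 w)"
proof (induction "length w" arbitrary: w rule: less_induct)
  case less
  show ?case
  proof (cases "\<exists>u v j k. w = u @ [T j, S k] @ v")
    case True
    then obtain u v j k where w: "w = u @ [T j, S k] @ v" by blast
    have "reduces A (mono 1 (u @ v))" using less w by simp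
    then show ?thesis using reduces_TS_factor less.prems w by simp
  next
    case False
    then obtain \<mu> \<nu> where w: "w = map S \<mu> @ map T \<nu>" using no_TS_factor by blast
    have \<mu>: "set \<mu> \<subseteq> idx A" and \<nu>: "set \<nu> \<subseteq> idx A" using less.prems w by auto
    show ?thesis
    proof (cases "normal_pair A \<mu> (rev \<nu>)")
      case True
      then have "normal_word A w" unfolding normal_word_def using w \<mu> \<nu>
        by (intro exI[of _ \<mu>] exI[of _ "rev \<nu>"]) simp
      then show ?thesis by (rule reduces_normal_word)
    next
      case False
      then obtain d \<mu>' \<nu>' where A: "A = Ld d" and \<mu>': "\<mu> = \<mu>' @ [1]" and \<nu>': "\<nu> = 1 # \<nu>'"
        by (rule not_normal_ST_word)
      have "reduces A (mono 1 (map S \<mu>' @ map T \<nu>'))"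
        using less w \<mu>' \<nu>' by simp
      moreover have "1 \<le> d" "set \<mu>' \<subseteq> {1..d}" "set \<nu>' \<subseteq> {1..d}" using \<mu> \<nu> \<mu>' \<nu>' A by auto
      ultimately show ?thesis using reduces_Ld_eliminate_ST w \<mu>' \<nu>' A by simp
    qed
  qed
qed

lemma reduces_poly:
  assumes P: "ncpoly_over (gens A) P"
  shows "reduces A P"
proof -
  have fin: "finite (supp P)" using P by (simp add: ncpoly_over_def supp_def)
  have "reduces A (\<lambda>v. \<Sum>w\<in>supp P. P w * mono 1 w v)"
    using P fin by (intro reduces_sum reduces_smult reduces_word) (auto simp: ncpoly_over_def supp_def)
  also have "(\<lambda>v. \<Sum>w\<in>supp P. P w * mono 1 w v) = P"
  proof
    fix v
    have "(\<Sum>w\<in>supp P. P w * mono 1 w v) = (\<Sum>w\<in>supp P. if w = v then P w else 0)"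
      by (rule sum.cong) (auto simp: mono_def)
    also have "\<dots> = P v" using fin by (simp add: supp_def)
    finally show "(\<Sum>w\<in>supp P. P w * mono 1 w v) = P v" .
  qed
  finally show ?thesis .
qed

definition T_count :: "gen list \<Rightarrow> nat" where
  "T_count v = length (filter (\<lambda>g. case g of S _ \<Rightarrow> False | T _ \<Rightarrow> True) v)"

lemma T_count_ST_word: "T_count (map S \<mu> @ map T \<nu>) = length \<nu>"
  by (simp add: T_count_def filter_map comp_def)

lemma ST_word_inject: "map S \<mu> @ map T \<nu> = map S \<mu>' @ map T \<nu>' \<Longrightarrow> \<mu> = \<mu>' \<and> \<nu> = \<nu>'"
proof (induction \<mu> arbitrary: \<mu>')
  case Nil
  then show ?case by (cases \<mu>') (auto simp: inj_map_eq_map inj_def)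
next
  case (Cons j \<mu>)
  then show ?case by (cases \<mu>') auto
qed

section \<open>Evaluation of polynomials\<close>

lemma word_op_Nil [simp]: "word_op \<rho> [] = id"
  by (simp add: word_op_def)

lemma word_op_Cons [simp]: "word_op \<rho> (g # w) \<xi> = \<rho> g (word_op \<rho> w \<xi>)"
  by (simp add: word_op_def)

lemma word_op_append: "word_op \<rho> (u @ v) \<xi> = word_op \<rho> u (word_op \<rho> v \<xi>)"
  by (induction u) simp_all

lemma nc_eval_supp: "nc_eval \<rho> P \<xi> x = (\<Sum>w\<in>supp P. P w * word_op \<rho> w \<xi> x)"
  by (simp add: nc_eval_def supp_def)

lemma nc_eval_superset:
  "finite W \<Longrightarrow> supp P \<subseteq> W \<Longrightarrow> nc_eval \<rho> P \<xi> x = (\<Sum>w\<in>W. P w * word_op \<rho> w \<xi> x)"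
  unfolding nc_eval_supp by (rule sum.mono_neutral_left) (auto simp: supp_def)

lemma nc_eval_lincomb:
  assumes "finite (supp P)" "finite (supp Q)"
  shows "nc_eval \<rho> (\<lambda>v. a * P v + b * Q v) \<xi> x = a * nc_eval \<rho> P \<xi> x + b * nc_eval \<rho> Q \<xi> x"
proof -
  let ?W = "supp P \<union> supp Q"
  have fin: "finite ?W" using assms by simp
  have "nc_eval \<rho> (\<lambda>v. a * P v + b * Q v) \<xi> x = (\<Sum>w\<in>?W. (a * P w + b * Q w) * word_op \<rho> w \<xi> x)"
    by (rule nc_eval_superset[OF fin]) (auto simp: supp_def)
  also have "\<dots> = a * (\<Sum>w\<in>?W. P w * word_op \<rho> w \<xi> x) + b * (\<Sum>w\<in>?W. Q w * word_op \<rho> w \<xi> x)"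
    by (simp add: algebra_simps sum.distrib sum_distrib_left)
  also have "\<dots> = a * nc_eval \<rho> P \<xi> x + b * nc_eval \<rho> Q \<xi> x"
    using nc_eval_superset[OF fin, of P] nc_eval_superset[OF fin, of Q] by simp
  finally show ?thesis .
qed

lemma nc_eval_diff:
  "finite (supp P) \<Longrightarrow> finite (supp Q) \<Longrightarrow>
   nc_eval \<rho> (\<lambda>v. P v - Q v) \<xi> x = nc_eval \<rho> P \<xi> x - nc_eval \<rho> Q \<xi> x"
  using nc_eval_lincomb[of P Q \<rho> 1 "-1"] by simp

lemma nc_eval_sum:
  "finite F \<Longrightarrow> (\<And>j. j \<in> F \<Longrightarrow> finite (supp (P j))) \<Longrightarrow>
   nc_eval \<rho> (\<lambda>v. \<Sum>j\<in>F. P j v) \<xi> x = (\<Sum>j\<in>F. nc_eval \<rho> (P j) \<xi> x)"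
proof (induction F rule: finite_induct)
  case empty
  then show ?case by (simp add: nc_eval_def)
next
  case (insert k F)
  then show ?case
    using nc_eval_lincomb[of "P k" "\<lambda>v. \<Sum>j\<in>F. P j v" \<rho> 1 1] finite_supp_sum[of F P] by simp
qed

lemma nc_eval_mono: "nc_eval \<rho> (mono c w) \<xi> x = c * word_op \<rho> w \<xi> x"
proof -
  have "supp (mono c w) \<subseteq> {w}" by (auto simp: supp_def mono_def)
  then show ?thesis using nc_eval_superset[of "{w}" "mono c w" \<rho> \<xi> x] by (simp add: mono_def)
qed

text \<open>Generators acting linearly on all of (nat \<Rightarrow> complex); this is what makes the
  evaluation multiplicative with respect to left multiplication.\<close>
definition linear_gens :: "(gen \<Rightarrow> op) \<Rightarrow> bool" where
  "linear_gens \<rho> \<longleftrightarrow> (\<forall>g \<xi> \<eta> c. \<rho> g (\<lambda>n. c * \<xi> n + \<eta> n) = (\<lambda>n. c * \<rho> g \<xi> n + \<rho> g \<eta> n))"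

lemma word_op_linear:
  assumes "linear_gens \<rho>"
  shows "word_op \<rho> w (\<lambda>n. c * \<xi> n + \<eta> n) = (\<lambda>n. c * word_op \<rho> w \<xi> n + word_op \<rho> w \<eta> n)"
  using assms by (induction w) (simp_all add: linear_gens_def)

lemma word_op_zero:
  assumes "linear_gens \<rho>"
  shows "word_op \<rho> w (\<lambda>_. 0) = (\<lambda>_. 0)"
  using word_op_linear[OF assms, of w "-1" "\<lambda>_. 0" "\<lambda>_. 0"] by (simp add: fun_eq_iff)

lemma word_op_sum:
  assumes "linear_gens \<rho>" and "finite U"
  shows "word_op \<rho> w (\<lambda>n. \<Sum>u\<in>U. c u * f u n) = (\<lambda>n. \<Sum>u\<in>U. c u * word_op \<rho> w (f u) n)"
  using assms(2) by (induction U) (simp_all add: word_op_zero[OF assms(1)] word_op_linear[OF assms(1)])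

lemma nc_eval_lmult:
  assumes lin: "linear_gens \<rho>" and fin: "finite (supp P)"
  shows "nc_eval \<rho> (ncmult (mono c w) P) \<xi> = word_op \<rho> w (\<lambda>n. c * nc_eval \<rho> P \<xi> n)"
proof
  fix x
  have "nc_eval \<rho> (ncmult (mono c w) P) \<xi> x
      = (\<Sum>v\<in>(\<lambda>u. w @ u) ` supp P. ncmult (mono c w) P v * word_op \<rho> v \<xi> x)"
    using fin by (intro nc_eval_superset supp_ncmult_mono_left) simp
  also have "\<dots> = (\<Sum>u\<in>supp P. (c * P u) * word_op \<rho> w (word_op \<rho> u \<xi>) x)"
    by (subst sum.reindex) (auto simp: inj_on_def ncmult_mono_left word_op_append)
  also have "\<dots> = word_op \<rho> w (\<lambda>n. \<Sum>u\<in>supp P. (c * P u) * word_op \<rho> u \<xi> n) x"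
    using word_op_sum[OF lin fin] by simp
  also have "(\<lambda>n. \<Sum>u\<in>supp P. (c * P u) * word_op \<rho> u \<xi> n) = (\<lambda>n. c * nc_eval \<rho> P \<xi> n)"
    by (simp add: nc_eval_supp sum_distrib_left mult.assoc)
  finally show "nc_eval \<rho> (ncmult (mono c w) P) \<xi> x = word_op \<rho> w (\<lambda>n. c * nc_eval \<rho> P \<xi> n) x" .
qed

lemma nc_eval_rmult:
  assumes fin: "finite (supp P)"
  shows "nc_eval \<rho> (ncmult P (mono 1 w)) \<xi> = nc_eval \<rho> P (word_op \<rho> w \<xi>)"
proof
  fix x
  have "nc_eval \<rho> (ncmult P (mono 1 w)) \<xi> x
      = (\<Sum>v\<in>(\<lambda>u. u @ w) ` supp P. ncmult P (mono 1 w) v * word_op \<rho> v \<xi> x)"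
    using fin by (intro nc_eval_superset supp_ncmult_mono_right) simp
  also have "\<dots> = (\<Sum>u\<in>supp P. P u * word_op \<rho> u (word_op \<rho> w \<xi>) x)"
    by (subst sum.reindex) (auto simp: inj_on_def ncmult_mono_right word_op_append)
  finally show "nc_eval \<rho> (ncmult P (mono 1 w)) \<xi> x = nc_eval \<rho> P (word_op \<rho> w \<xi>) x"
    by (simp add: nc_eval_supp)
qed

lemma ideal_gen_eval_zero:
  assumes lin: "linear_gens \<rho>" and fin: "\<And>r. r \<in> R \<Longrightarrow> finite (supp r)"
    and rel: "\<And>r \<xi>. r \<in> R \<Longrightarrow> nc_eval \<rho> r \<xi> = (\<lambda>_. 0)"
    and P: "P \<in> ideal_gen G R"
  shows "nc_eval \<rho> P \<xi> = (\<lambda>_. 0)"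
  using P
proof (induction arbitrary: \<xi>)
  case zero
  then show ?case by (simp add: nc_eval_def)
next
  case (add P Q)
  then show ?case
    using ideal_gen_finite_supp[OF fin] nc_eval_lincomb[of P Q \<rho> 1 1] by (simp add: fun_eq_iff)
next
  case (lmult P w c)
  then show ?case
    using ideal_gen_finite_supp[OF fin] by (simp add: nc_eval_lmult[OF lin] word_op_zero[OF lin])
next
  case (rmult P w)
  then show ?case
    using ideal_gen_finite_supp[OF fin] by (simp add: nc_eval_rmult)
qed (rule rel)

section \<open>Shift operators\<close>

definition push_op :: "(nat \<Rightarrow> nat) \<Rightarrow> op" where
  "push_op f \<xi> n = (if n \<in> range f then \<xi> (inv f n) else 0)"

definition pull_op :: "(nat \<Rightarrow> nat) \<Rightarrow> op" where
  "pull_op f \<xi> n = \<xi> (f n)"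

lemma summable_reindex_le:
  fixes g :: "nat \<Rightarrow> real"
  assumes nonneg: "\<And>n. 0 \<le> g n" and sg: "summable g" and inj: "inj_on h B"
  shows "summable (\<lambda>n. if n \<in> B then g (h n) else 0) \<and> (\<Sum>n. if n \<in> B then g (h n) else 0) \<le> suminf g"
proof -
  let ?F = "\<lambda>n. if n \<in> B then g (h n) else 0"
  have partial: "sum ?F {..<N} \<le> suminf g" for N
  proof -
    have "sum ?F {..<N} = sum (\<lambda>n. g (h n)) ({..<N} \<inter> B)"
      by (simp add: sum.inter_restrict)
    also have "\<dots> = sum g (h ` ({..<N} \<inter> B))"
      by (rule sum.reindex[symmetric, unfolded comp_def]) (rule inj_on_subset[OF inj], blast)
    also have "\<dots> \<le> suminf g" by (rule sum_le_suminf[OF sg]) (simp_all add: nonneg)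
    finally show ?thesis .
  qed
  have "summable ?F" by (rule summableI_nonneg_bounded[OF _ partial]) (simp add: nonneg)
  then show ?thesis using suminf_le_const[OF _ partial] by simp
qed

lemma bounded_op_partial_subst:
  assumes inj: "inj_on h B" and Op: "\<And>\<xi> n. Op \<xi> n = (if n \<in> B then \<xi> (h n) else 0)"
    and p: "0 < p"
  shows "bounded_op p Op"
proof -
  have sums: "summable (\<lambda>n. norm (Op \<xi> n) powr p) \<and>
      (\<Sum>n. norm (Op \<xi> n) powr p) \<le> (\<Sum>n. norm (\<xi> n) powr p)" if "\<xi> \<in> lp p" for \<xi>
  proof -
    have "(\<lambda>n. norm (Op \<xi> n) powr p) = (\<lambda>n. if n \<in> B then norm (\<xi> (h n)) powr p else 0)"
      by (rule ext) (simp add: Op)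
    then show ?thesis
      using summable_reindex_le[OF _ _ inj, of "\<lambda>n. norm (\<xi> n) powr p"] that by (simp add: lp_def)
  qed
  have lin: "Op (\<lambda>n. c * \<xi> n + \<eta> n) = (\<lambda>n. c * Op \<xi> n + Op \<eta> n)" for c \<xi> \<eta>
    by (rule ext) (simp add: Op)
  have contr: "lp_norm p (Op \<xi>) \<le> 1 * lp_norm p \<xi>" if "\<xi> \<in> lp p" for \<xi>
  proof -
    have "0 \<le> (\<Sum>n. norm (Op \<xi> n) powr p)"
      using sums[OF that] by (intro suminf_nonneg) auto
    then show ?thesis unfolding lp_norm_def using sums[OF that] p by (simp add: powr_mono2)
  qed
  show ?thesis unfolding bounded_op_def using sums lin contr by (auto simp: lp_def intro!: exI[of _ 1])
qed

lemma bounded_push_op: "inj f \<Longrightarrow> 0 < p \<Longrightarrow> bounded_op p (push_op f)"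
  by (rule bounded_op_partial_subst[of "inv f" "range f"]) (simp_all add: inj_on_inv_into push_op_def)

lemma bounded_pull_op: "inj f \<Longrightarrow> 0 < p \<Longrightarrow> bounded_op p (pull_op f)"
  by (rule bounded_op_partial_subst[of f UNIV]) (simp_all add: pull_op_def)

lemma image_set_transf_bij:
  assumes inj: "inj f"
  shows "set_transf_bij UNIV (range f) ((`) f)"
  unfolding set_transf_bij_def
proof (intro conjI allI impI)
  show "bij_betw ((`) f) (Pow UNIV) (Pow (range f))"
    unfolding bij_betw_def using inj_on_image_Pow[OF inj] image_Pow_surj[of f UNIV] by simp
qed (simp_all add: image_set_diff[OF inj] image_Int[OF inj] image_UN)

lemma inv_image_singleton:
  fixes f :: "nat \<Rightarrow> nat"
  assumes "inj f"
  shows "inv ((`) f) {f x} = {x}"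
  using inv_into_f_eq[OF inj_on_image_Pow[OF assms], of "{x}"] by simp

lemma inv_inv_image_singleton:
  fixes f :: "nat \<Rightarrow> nat"
  assumes inj: "inj f"
  shows "inv_into (Pow (range f)) (inv ((`) f)) {x} = {f x}"
proof -
  have "Pow (range f) \<subseteq> range ((`) f)"
  proof
    fix X assume "X \<in> Pow (range f)"
    then have "X = f ` (f -` X)" by auto
    then show "X \<in> range ((`) f)" by blast
  qed
  then have "inj_on (inv ((`) f)) (Pow (range f))"
    by (rule inj_on_inv_into)
  then show ?thesis
    by (rule inv_into_f_eq) (auto simp: inv_image_singleton[OF inj])
qed

lemma spatial_pi_image:
  fixes f :: "nat \<Rightarrow> nat"
  assumes inj: "inj f"
  shows "spatial_pi p UNIV (range f) ((`) f) (\<lambda>_. 1) \<xi> = push_op f \<xi>"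
proof
  fix n
  show "spatial_pi p UNIV (range f) ((`) f) (\<lambda>_. 1) \<xi> n = push_op f \<xi> n"
  proof (cases "n \<in> range f")
    case True
    then obtain x where n: "n = f x" by blast
    have "(THE x'. f ` {x'} = {f x}) = x"
      by (rule the_equality) (auto dest: injD[OF inj])
    then show ?thesis using n inj
      by (simp add: spatial_pi_def push_op_def rn_deriv_def pushfwd_def inv_image_singleton)
  qed (simp add: spatial_pi_def push_op_def)
qed

lemma spatial_pi_inv_image:
  fixes f :: "nat \<Rightarrow> nat"
  assumes inj: "inj f"
  shows "spatial_pi p (range f) UNIV (inv_into (Pow UNIV) ((`) f))
     (\<lambda>x. inverse (pushfwd (range f) (inv_into (Pow UNIV) ((`) f)) (\<lambda>_. 1) x)) \<xi> = pull_op f \<xi>"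
proof
  fix x
  have "(THE y. y \<in> range f \<and> inv_into (Pow UNIV) ((`) f) {y} = {x}) = f x"
    by (rule the_equality) (auto simp: inv_image_singleton[OF inj])
  then show "spatial_pi p (range f) UNIV (inv_into (Pow UNIV) ((`) f))
     (\<lambda>x. inverse (pushfwd (range f) (inv_into (Pow UNIV) ((`) f)) (\<lambda>_. 1) x)) \<xi> x = pull_op f \<xi> x"
    by (simp add: spatial_pi_def pull_op_def rn_deriv_def pushfwd_def inv_inv_image_singleton[OF inj])
qed

lemma spatial_pair_push_pull:
  fixes f :: "nat \<Rightarrow> nat"
  assumes "inj f"
  shows "spatial_pair p (push_op f) (pull_op f)"
proof -
  have "spatial_system UNIV (range f) ((`) f) (\<lambda>_. 1)"
    unfolding spatial_system_def using image_set_transf_bij[OF assms] by simp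
  then show ?thesis
    unfolding spatial_pair_def
    using spatial_pi_image[OF assms] spatial_pi_inv_image[OF assms] by (intro exI) auto
qed

section \<open>Representations by branching systems\<close>

text \<open>walk sig [j_1, ..., j_n] x = sig j_1 (... (sig j_n x)); it describes where the
  basis vector at x is sent by s_{j_1} ... s_{j_n}.\<close>
primrec walk :: "(nat \<Rightarrow> nat \<Rightarrow> nat) \<Rightarrow> nat list \<Rightarrow> nat \<Rightarrow> nat" where
  "walk sig [] x = x"
| "walk sig (j # \<gamma>) x = sig j (walk sig \<gamma> x)"

lemma walk_append: "walk sig (\<alpha> @ \<beta>) x = walk sig \<alpha> (walk sig \<beta> x)"
  by (induction \<alpha>) auto

definition separating :: "alg \<Rightarrow> (nat \<Rightarrow> nat \<Rightarrow> nat) \<Rightarrow> nat \<Rightarrow> bool" where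
  "separating A sig z \<longleftrightarrow> (\<forall>\<gamma> z'. set \<gamma> \<subseteq> idx A \<longrightarrow> z = walk sig \<gamma> z' \<longrightarrow> \<gamma> \<noteq> [] \<longrightarrow>
     (\<forall>\<mu> \<nu>. \<not> normal_pair A (\<mu> @ \<gamma>) (\<nu> @ \<gamma>)))"

fun shift_rep :: "(nat \<Rightarrow> nat \<Rightarrow> nat) \<Rightarrow> gen \<Rightarrow> op" where
  "shift_rep sig (S j) = push_op (sig j)"
| "shift_rep sig (T j) = pull_op (sig j)"

lemma linear_gens_shift_rep: "linear_gens (shift_rep sig)"
  unfolding linear_gens_def
proof (intro allI)
  fix g \<xi> \<eta> and c :: complex
  show "shift_rep sig g (\<lambda>n. c * \<xi> n + \<eta> n) = (\<lambda>n. c * shift_rep sig g \<xi> n + shift_rep sig g \<eta> n)"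
    by (cases g) (auto simp: push_op_def pull_op_def)
qed

text \<open>Point masses, on which injectivity is tested.\<close>
definition point_mass :: "nat \<Rightarrow> nat \<Rightarrow> complex" where
  "point_mass y n = (if n = y then 1 else 0)"

lemma point_mass_lp: "point_mass y \<in> lp p"
  unfolding lp_def by (simp, rule summable_finite[of "{y}"]) (simp_all add: point_mass_def)

text \<open>The data from which the representation is built: injections sig_j with disjoint
  ranges (covering everything for L_d, where \<Sum> s_j t_j = 1 must hold), a level raised by
  one along each sig_j (giving freeness), and a separating point (giving injectivity).\<close>
locale branching_system =
  fixes A :: alg and sig :: "nat \<Rightarrow> nat \<Rightarrow> nat" and level :: "nat \<Rightarrow> int"
  assumes sig_inj: "j \<in> idx A \<Longrightarrow> inj (sig j)"
    and sig_disjoint: "j \<in> idx A \<Longrightarrow> k \<in> idx A \<Longrightarrow> sig j x = sig k y \<Longrightarrow> j = k"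
    and level_sig: "j \<in> idx A \<Longrightarrow> level (sig j x) = level x + 1"
    and sig_cover: "A = Ld d \<Longrightarrow> \<exists>j\<in>{1..d}. x \<in> range (sig j)"
    and separating_point: "\<exists>z. separating A sig z"
begin

abbreviation \<rho> :: "gen \<Rightarrow> op" where
  "\<rho> \<equiv> shift_rep sig"

lemma inv_sig [simp]: "j \<in> idx A \<Longrightarrow> inv (sig j) (sig j x) = x"
  using sig_inj by (simp add: inv_f_f)

lemma walk_inj: "set \<mu> \<subseteq> idx A \<Longrightarrow> walk sig \<mu> x = walk sig \<mu> y \<Longrightarrow> x = y"
  by (induction \<mu>) (auto dest: injD[OF sig_inj])

lemma level_walk: "set \<gamma> \<subseteq> idx A \<Longrightarrow> level (walk sig \<gamma> u) = level u + int (length \<gamma>)"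
  by (induction \<gamma>) (auto simp: level_sig)

lemma walk_meet:
  "set \<alpha> \<subseteq> idx A \<Longrightarrow> set \<beta> \<subseteq> idx A \<Longrightarrow> walk sig \<alpha> u = walk sig \<beta> v \<Longrightarrow>
   (\<exists>\<gamma>. \<beta> = \<alpha> @ \<gamma> \<and> u = walk sig \<gamma> v) \<or> (\<exists>\<gamma>. \<alpha> = \<beta> @ \<gamma> \<and> v = walk sig \<gamma> u)"
proof (induction \<alpha> arbitrary: \<beta>)
  case (Cons a \<alpha>)
  show ?case
  proof (cases \<beta>)
    case (Cons b \<beta>')
    have meet: "sig a (walk sig \<alpha> u) = sig b (walk sig \<beta>' v)" using Cons.prems Cons by simp
    then have "a = b" using sig_disjoint Cons.prems Cons by simp
    moreover have "walk sig \<alpha> u = walk sig \<beta>' v"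
      using meet injD[OF sig_inj] Cons.prems \<open>a = b\<close> by auto
    ultimately show ?thesis using Cons.IH[of \<beta>'] Cons.prems Cons by auto
  qed (use Cons.prems in simp)
qed simp

text \<open>Since walks raise the level, two walks from the same point to the same point agree.\<close>
lemma walk_same_ends:
  assumes "set \<alpha> \<subseteq> idx A" "set \<beta> \<subseteq> idx A" "walk sig \<alpha> u = walk sig \<beta> u"
  shows "\<alpha> = \<beta>"
proof -
  have loop: "\<delta> = []" if "set \<delta> \<subseteq> idx A" "u = walk sig \<delta> u" for \<delta>
    using level_walk[OF that(1), of u] that(2) by simp
  from walk_meet[OF assms] show ?thesis
    using assms(1,2) loop by auto
qed

lemma word_op_T: "word_op \<rho> (map T \<nu>) \<xi> x = \<xi> (walk sig (rev \<nu>) x)"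
  by (induction \<nu> arbitrary: x) (simp_all add: pull_op_def walk_append)

lemma word_op_S_on_walk: "set \<mu> \<subseteq> idx A \<Longrightarrow> word_op \<rho> (map S \<mu>) \<xi> (walk sig \<mu> z) = \<xi> z"
  by (induction \<mu>) (simp_all add: push_op_def)

lemma word_op_S_off_walk:
  "set \<mu> \<subseteq> idx A \<Longrightarrow> x \<notin> range (walk sig \<mu>) \<Longrightarrow> word_op \<rho> (map S \<mu>) \<xi> x = 0"
proof (induction \<mu> arbitrary: x)
  case (Cons j \<mu>)
  show ?case
  proof (cases "x \<in> range (sig j)")
    case True
    then obtain y where y: "x = sig j y" by blast
    then have "y \<notin> range (walk sig \<mu>)" using Cons.prems by auto
    then show ?thesis using Cons y by (simp add: push_op_def)
  qed (simp add: push_op_def)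
qed simp

lemma word_op_normal_point_mass:
  assumes \<alpha>: "set \<alpha> \<subseteq> idx A" and \<beta>: "set \<beta> \<subseteq> idx A"
  shows "word_op \<rho> (map S \<alpha> @ map T (rev \<beta>)) (point_mass y) x =
    (if \<exists>z. x = walk sig \<alpha> z \<and> y = walk sig \<beta> z then 1 else 0)"
proof (cases "x \<in> range (walk sig \<alpha>)")
  case True
  then obtain z where z: "x = walk sig \<alpha> z" by blast
  have "(\<exists>z'. x = walk sig \<alpha> z' \<and> y = walk sig \<beta> z') \<longleftrightarrow> y = walk sig \<beta> z"
    using z walk_inj[OF \<alpha>] by metis
  then show ?thesis using z \<alpha>
    by (simp add: word_op_append word_op_S_on_walk word_op_T point_mass_def)
next
  case False
  then show ?thesis using \<alpha> by (auto simp add: word_op_append word_op_S_off_walk)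
qed

text \<open>The relations hold: t_j s_j = 1 since sig_j is injective, t_j s_k = 0 for j \<noteq> k since
  the ranges are disjoint, and \<Sum> s_j t_j = 1 in L_d since the ranges cover.\<close>
lemma eval_rel_TS_same:
  "j \<in> idx A \<Longrightarrow> nc_eval \<rho> (\<lambda>u. mono 1 [T j, S j] u - mono 1 [] u) \<xi> = (\<lambda>_. 0)"
  by (simp add: fun_eq_iff nc_eval_diff nc_eval_mono push_op_def pull_op_def)

lemma eval_rel_TS_other:
  assumes "j \<in> idx A" "k \<in> idx A" "j \<noteq> k"
  shows "nc_eval \<rho> (mono 1 [T j, S k]) \<xi> = (\<lambda>_. 0)"
proof
  fix x
  have "sig j x \<notin> range (sig k)" using sig_disjoint[OF assms(1,2)] assms(3) by auto
  then show "nc_eval \<rho> (mono 1 [T j, S k]) \<xi> x = 0"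
    by (simp add: nc_eval_mono push_op_def pull_op_def)
qed

lemma eval_rel_ST_sum:
  assumes A: "A = Ld d"
  shows "nc_eval \<rho> (\<lambda>u. (\<Sum>j\<in>{1..d}. mono 1 [S j, T j] u) - mono 1 [] u) \<xi> = (\<lambda>_. 0)"
proof
  fix x
  obtain j0 where j0: "j0 \<in> {1..d}" "x \<in> range (sig j0)" using sig_cover[OF A] by blast
  have ST: "word_op \<rho> [S j, T j] \<xi> x = (if j = j0 then \<xi> x else 0)" if j: "j \<in> {1..d}" for j
  proof -
    have "x \<in> range (sig j) \<longleftrightarrow> j = j0"
    proof
      assume "x \<in> range (sig j)"
      then obtain a where "x = sig j a" by blast
      moreover obtain b where "x = sig j0 b" using j0 by blast
      ultimately show "j = j0" using sig_disjoint[of j j0 a b] j j0 A by simp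
    qed (use j0 in simp)
    then show ?thesis using j0 by (auto simp: push_op_def pull_op_def f_inv_into_f)
  qed
  have "nc_eval \<rho> (\<lambda>u. \<Sum>j\<in>{1..d}. mono 1 [S j, T j] u) \<xi> x = (\<Sum>j\<in>{1..d}. word_op \<rho> [S j, T j] \<xi> x)"
    by (simp add: nc_eval_sum nc_eval_mono)
  also have "\<dots> = (\<Sum>j\<in>{1..d}. if j = j0 then \<xi> x else 0)"
    by (rule sum.cong[OF refl ST])
  also have "\<dots> = \<xi> x" using j0 by simp
  finally show "nc_eval \<rho> (\<lambda>u. (\<Sum>j\<in>{1..d}. mono 1 [S j, T j] u) - mono 1 [] u) \<xi> x = 0"
    by (simp add: nc_eval_diff finite_supp_sum nc_eval_mono)
qed

lemma eval_rels:
  assumes "r \<in> rels A"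
  shows "nc_eval \<rho> r \<xi> = (\<lambda>_. 0)"
  using assms
proof (cases rule: rels_cases)
  case (TS_same j)
  then show ?thesis using eval_rel_TS_same by simp
next
  case (TS_other j k)
  then show ?thesis using eval_rel_TS_other by simp
next
  case (ST_sum d)
  then show ?thesis using eval_rel_ST_sum[OF ST_sum(1)] by simp
qed

lemma eval_rel_ideal: "P \<in> rel_ideal A \<Longrightarrow> nc_eval \<rho> P \<xi> = (\<lambda>_. 0)"
  by (rule ideal_gen_eval_zero[OF linear_gens_shift_rep rels_finite_supp eval_rels])

text \<open>Let z be separating and let x, y be the ends of the walks
  \<mu>_0, \<nu>_0 from z.  A normal pair (\<alpha>, \<beta>) with |\<beta>| \<ge> |\<nu>_0| whose walks from a common
  point also end at x and y must be (\<mu>_0, \<nu>_0): otherwise both would have to pass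
  through z along a common nonempty suffix \<gamma>, which normal pairs cannot have.\<close>
lemma normal_pair_separation:
  assumes z: "separating A sig z"
    and \<mu>0: "set \<mu>0 \<subseteq> idx A" and \<nu>0: "set \<nu>0 \<subseteq> idx A"
    and \<alpha>: "set \<alpha> \<subseteq> idx A" and \<beta>: "set \<beta> \<subseteq> idx A" and normal: "normal_pair A \<alpha> \<beta>"
    and longer: "length \<nu>0 \<le> length \<beta>"
    and meet_x: "walk sig \<alpha> z' = walk sig \<mu>0 z" and meet_y: "walk sig \<beta> z' = walk sig \<nu>0 z"
  shows "\<alpha> = \<mu>0 \<and> \<beta> = \<nu>0"
proof -
  obtain \<gamma> where \<gamma>: "\<beta> = \<nu>0 @ \<gamma>" "z = walk sig \<gamma> z'"
  proof -
    from walk_meet[OF \<nu>0 \<beta> meet_y[symmetric]] show ?thesis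
    proof
      assume "\<exists>\<gamma>. \<beta> = \<nu>0 @ \<gamma> \<and> z = walk sig \<gamma> z'"
      then show ?thesis using that by blast
    next
      assume "\<exists>\<gamma>. \<nu>0 = \<beta> @ \<gamma> \<and> z' = walk sig \<gamma> z"
      then obtain \<gamma> where "\<nu>0 = \<beta> @ \<gamma>" "z' = walk sig \<gamma> z" by blast
      moreover from this longer have "\<gamma> = []" by simp
      ultimately show ?thesis using that[of "[]"] by simp
    qed
  qed
  have \<gamma>_idx: "set \<gamma> \<subseteq> idx A" using \<gamma>(1) \<beta> by simp
  have "walk sig \<alpha> z' = walk sig (\<mu>0 @ \<gamma>) z'" using meet_x \<gamma>(2) by (simp add: walk_append)
  then have \<alpha>_eq: "\<alpha> = \<mu>0 @ \<gamma>" using walk_same_ends[OF \<alpha>] \<mu>0 \<gamma>_idx by simp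
  have "\<gamma> = []"
  proof (rule ccontr)
    assume "\<gamma> \<noteq> []"
    with z \<gamma>_idx \<gamma>(2) have "\<not> normal_pair A (\<mu>0 @ \<gamma>) (\<nu>0 @ \<gamma>)"
      unfolding separating_def by blast
    then show False using normal \<alpha>_eq \<gamma>(1) by simp
  qed
  then show ?thesis using \<alpha>_eq \<gamma>(1) by simp
qed

lemma normal_word_at_separated_point:
  assumes z: "separating A sig z" and \<mu>0: "set \<mu>0 \<subseteq> idx A" and \<nu>0: "set \<nu>0 \<subseteq> idx A"
    and v: "normal_word A v" and longer: "T_count (map S \<mu>0 @ map T (rev \<nu>0)) \<le> T_count v"
  shows "word_op \<rho> v (point_mass (walk sig \<nu>0 z)) (walk sig \<mu>0 z) =
    (if v = map S \<mu>0 @ map T (rev \<nu>0) then 1 else 0)"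
proof -
  obtain \<alpha> \<beta> where v_eq: "v = map S \<alpha> @ map T (rev \<beta>)" and \<alpha>: "set \<alpha> \<subseteq> idx A"
      and \<beta>: "set \<beta> \<subseteq> idx A" and np: "normal_pair A \<alpha> \<beta>"
    using v unfolding normal_word_def by blast
  have "(\<exists>z'. walk sig \<mu>0 z = walk sig \<alpha> z' \<and> walk sig \<nu>0 z = walk sig \<beta> z') \<longleftrightarrow> \<alpha> = \<mu>0 \<and> \<beta> = \<nu>0"
  proof
    assume "\<exists>z'. walk sig \<mu>0 z = walk sig \<alpha> z' \<and> walk sig \<nu>0 z = walk sig \<beta> z'"
    moreover have "length \<nu>0 \<le> length \<beta>"
      using longer by (simp add: v_eq T_count_ST_word)
    ultimately show "\<alpha> = \<mu>0 \<and> \<beta> = \<nu>0"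
      using normal_pair_separation[OF z \<mu>0 \<nu>0 \<alpha> \<beta> np] by metis
  qed blast
  moreover have "v = map S \<mu>0 @ map T (rev \<nu>0) \<longleftrightarrow> \<alpha> = \<mu>0 \<and> \<beta> = \<nu>0"
    using ST_word_inject v_eq by fastforce
  ultimately show ?thesis using word_op_normal_point_mass[OF \<alpha> \<beta>] v_eq by simp
qed

text \<open>A combination of normal words acting as zero on all point masses is zero: for a word
  v_0 of least T-count in the support, only its coefficient survives at the point masses
  of the previous lemma.\<close>
lemma normal_combination_zero:
  assumes fin: "finite (supp Q)" and normal: "\<forall>v\<in>supp Q. normal_word A v"
    and vanish: "\<And>x y. nc_eval \<rho> Q (point_mass y) x = 0"
  shows "Q = (\<lambda>_. 0)"
proof (rule ccontr)
  assume "Q \<noteq> (\<lambda>_. 0)"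
  then obtain v1 where "v1 \<in> supp Q" by (auto simp: supp_def)
  then obtain v0 where v0: "v0 \<in> supp Q" and least: "\<And>v. v \<in> supp Q \<Longrightarrow> T_count v0 \<le> T_count v"
    using ex_has_least_nat[of "\<lambda>v. v \<in> supp Q" v1 T_count] by blast
  obtain \<mu>0 \<nu>0 where v0_eq: "v0 = map S \<mu>0 @ map T (rev \<nu>0)" and \<mu>0: "set \<mu>0 \<subseteq> idx A"
      and \<nu>0: "set \<nu>0 \<subseteq> idx A"
    using normal v0 unfolding normal_word_def by blast
  obtain z where z: "separating A sig z" using separating_point by blast
  let ?x = "walk sig \<mu>0 z" and ?y = "walk sig \<nu>0 z"
  have "nc_eval \<rho> Q (point_mass ?y) ?x = (\<Sum>v\<in>supp Q. if v = v0 then Q v else 0)"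
    unfolding nc_eval_supp
    by (rule sum.cong) (use normal least normal_word_at_separated_point[OF z \<mu>0 \<nu>0] v0_eq in auto)
  also have "\<dots> = Q v0" using v0 fin by simp
  finally show False using vanish v0 by (simp add: supp_def)
qed

lemma shift_is_rep:
  assumes "0 < p"
  shows "is_rep p A \<rho>"
  unfolding is_rep_def
proof (intro conjI ballI)
  fix g assume "g \<in> gens A"
  then show "bounded_op p (\<rho> g)"
    using assms sig_inj by (auto simp: gens_def bounded_push_op bounded_pull_op)
qed (simp add: eval_rels)

lemma shift_injective: "injective_rep p A \<rho>"
  unfolding injective_rep_def
proof (intro allI impI)
  fix P assume P: "ncpoly_over (gens A) P" and zero: "\<forall>\<xi>\<in>lp p. nc_eval \<rho> P \<xi> = (\<lambda>_. 0)"
  obtain Q where Q: "finite (supp Q)" "\<forall>v\<in>supp Q. normal_word A v" "(\<lambda>v. P v - Q v) \<in> rel_ideal A"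
    using reduces_poly[OF P] unfolding reduces_def by blast
  have "finite (supp P)" using P by (simp add: ncpoly_over_def supp_def)
  then have "nc_eval \<rho> Q \<xi> x = nc_eval \<rho> P \<xi> x - nc_eval \<rho> (\<lambda>v. P v - Q v) \<xi> x" for \<xi> x
    using nc_eval_diff[of P Q \<rho> \<xi> x] Q(1) by simp
  then have "nc_eval \<rho> Q (point_mass y) x = 0" for x y
    using zero point_mass_lp eval_rel_ideal[OF Q(3)] by simp
  then have "Q = (\<lambda>_. 0)" by (rule normal_combination_zero[OF Q(1,2)])
  then show "P \<in> rel_ideal A" using Q(3) by simp
qed

lemma shift_free: "free_rep p A \<rho>"
  unfolding free_rep_def
proof (intro exI[of _ "\<lambda>m. {x. level x = m}"] conjI ballI allI impI)
  fix j m x and \<xi> :: "nat \<Rightarrow> complex" assume j: "j \<in> idx A" and supp: "\<forall>x. x \<notin> {x. level x = m} \<longrightarrow> \<xi> x = 0"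
    and "x \<notin> {x. level x = m + 1}"
  then show "\<rho> (S j) \<xi> x = 0" using level_sig[OF j] by (auto simp: push_op_def)
next
  fix j m x and \<xi> :: "nat \<Rightarrow> complex" assume j: "j \<in> idx A" and supp: "\<forall>x. x \<notin> {x. level x = m} \<longrightarrow> \<xi> x = 0"
    and "x \<notin> {x. level x = m - 1}"
  then show "\<rho> (T j) \<xi> x = 0" using level_sig[OF j] by (auto simp: pull_op_def)
qed auto

lemma shift_spatial: "spatial_rep p A \<rho>"
  unfolding spatial_rep_def using spatial_pair_push_pull sig_inj by simp

theorem shift_rep_properties:
  assumes "0 < p"
  shows "is_rep p A \<rho> \<and> injective_rep p A \<rho> \<and> free_rep p A \<rho> \<and> spatial_rep p A \<rho>"
  using shift_is_rep[OF assms] shift_injective shift_free shift_spatial by blast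

end

section \<open>Concrete branching systems\<close>

text \<open>All systems live on int \<times> nat, encoded as nat; the first coordinate is the level
  and sig_j raises it by one while acting by f_j on the second coordinate.\<close>
definition enc :: "int \<times> nat \<Rightarrow> nat" where
  "enc a = prod_encode (int_encode (fst a), snd a)"

definition dec :: "nat \<Rightarrow> int \<times> nat" where
  "dec x = (int_decode (fst (prod_decode x)), snd (prod_decode x))"

lemma dec_enc [simp]: "dec (enc a) = a"
  by (simp add: enc_def dec_def)

lemma enc_dec [simp]: "enc (dec x) = x"
  by (simp add: enc_def dec_def)

lemma enc_eq_iff [simp]: "enc a = enc b \<longleftrightarrow> a = b"
  by (metis dec_enc)

definition lift_sig :: "(nat \<Rightarrow> nat \<Rightarrow> nat) \<Rightarrow> nat \<Rightarrow> nat \<Rightarrow> nat" where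
  "lift_sig f j x = enc (fst (dec x) + 1, f j (snd (dec x)))"

definition lift_level :: "nat \<Rightarrow> int" where
  "lift_level x = fst (dec x)"

lemma lift_branching_system:
  assumes inj: "\<And>j. j \<in> idx A \<Longrightarrow> inj (f j)"
    and disjoint: "\<And>j k n n'. j \<in> idx A \<Longrightarrow> k \<in> idx A \<Longrightarrow> f j n = f k n' \<Longrightarrow> j = k"
    and cover: "\<And>d n. A = Ld d \<Longrightarrow> \<exists>j\<in>{1..d}. n \<in> range (f j)"
    and sep: "separating A (lift_sig f) (enc (0, 0))"
  shows "branching_system A (lift_sig f) lift_level"
proof
  fix j assume "j \<in> idx A"
  then show "inj (lift_sig f j)"
    using inj unfolding inj_def lift_sig_def by (metis enc_dec prod.collapse add_right_cancel enc_eq_iff prod.inject)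
next
  fix j k x y assume jk: "j \<in> idx A" "k \<in> idx A" and "lift_sig f j x = lift_sig f k y"
  then have "f j (snd (dec x)) = f k (snd (dec y))" unfolding lift_sig_def by simp
  then show "j = k" using disjoint jk by blast
next
  fix j x show "lift_level (lift_sig f j x) = lift_level x + 1"
    unfolding lift_sig_def lift_level_def by simp
next
  fix d x assume "A = Ld d"
  then obtain j n where j: "j \<in> {1..d}" "snd (dec x) = f j n" using cover by blast
  then have "lift_sig f j (enc (fst (dec x) - 1, n)) = x"
    unfolding lift_sig_def by (metis add.commute diff_add_cancel dec_enc fst_conv snd_conv enc_dec prod.collapse)
  then show "\<exists>j\<in>{1..d}. x \<in> range (lift_sig f j)" using j(1) by (metis rangeI)
qed (use sep in blast)

text \<open>If no f_j hits 0, the point (0, 0) has no predecessor and is trivially separating.\<close>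
lemma separating_no_predecessor:
  assumes "\<And>j n. j \<in> idx A \<Longrightarrow> f j n \<noteq> 0"
  shows "separating A (lift_sig f) (enc (0, 0))"
  unfolding separating_def
proof (intro allI impI)
  fix \<gamma> z' \<mu> \<nu> assume \<gamma>: "set \<gamma> \<subseteq> idx A" "enc (0, 0) = walk (lift_sig f) \<gamma> z'" "\<gamma> \<noteq> []"
  then obtain a \<gamma>' where "\<gamma> = a # \<gamma>'" by (cases \<gamma>) auto
  then show "\<not> normal_pair A (\<mu> @ \<gamma>) (\<nu> @ \<gamma>)"
    using \<gamma> assms[of a] by (simp add: lift_sig_def)
qed

lemma branching_system_pairing:
  assumes "\<And>d. A \<noteq> Ld d"
  shows "branching_system A (lift_sig (\<lambda>j n. Suc (prod_encode (j, n)))) lift_level"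
  by (rule lift_branching_system) (simp_all add: assms inj_def prod_encode_eq separating_no_predecessor)

lemma digit_unique: "a < (d::nat) \<Longrightarrow> b < d \<Longrightarrow> d * n + a = d * n' + b \<Longrightarrow> n = n' \<and> a = b"
  by (metis add.commute div_mult_self1 div_less mod_mult_self1 mod_less add_0 not_less0 mult.commute)

lemma walk_to_digit_zero:
  assumes "set \<gamma> \<subseteq> {1..d}" "enc (m, 0) = walk (lift_sig (\<lambda>j n. d * n + (j - 1))) \<gamma> z'"
  shows "\<forall>j\<in>set \<gamma>. j = 1"
  using assms
proof (induction \<gamma> arbitrary: m)
  case (Cons a \<gamma>)
  define w where "w = walk (lift_sig (\<lambda>j n. d * n + (j - 1))) \<gamma> z'"
  have "m = fst (dec w) + 1 \<and> d * snd (dec w) + (a - 1) = 0"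
    using Cons.prems(2) unfolding walk.simps(2) w_def[symmetric] by (simp add: lift_sig_def)
  then have m: "m = fst (dec w) + 1" and a: "a - 1 = 0" and n: "d * snd (dec w) = 0"
    by auto
  have "a = 1" "1 \<le> d" using a Cons.prems(1) by auto
  moreover have "enc (m - 1, 0) = w"
    using m n \<open>1 \<le> d\<close> by (metis add_diff_cancel_right' enc_dec mult_eq_0_iff not_one_le_zero prod.collapse)
  ultimately show ?case using Cons.IH[of "m - 1"] Cons.prems unfolding w_def by simp
qed simp

text \<open>L_d: sig_j (m, n) = (m + 1, d n + j - 1); the ranges of the f_j partition nat, and
  (0, 0) is separating since normal pairs never both end in 1.\<close>
lemma branching_system_Ld:
  assumes d: "1 \<le> d"
  shows "branching_system (Ld d) (lift_sig (\<lambda>j n. d * n + (j - 1))) lift_level"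
proof (rule lift_branching_system)
  fix j k n n' assume "j \<in> idx (Ld d)" "k \<in> idx (Ld d)" "d * n + (j - 1) = d * n' + (k - 1)"
  then show "j = k" using digit_unique[of "j - 1" d "k - 1" n n'] by auto
next
  fix d' n assume "Ld d = Ld d'"
  have "n = d * (n div d) + (n mod d + 1 - 1)" by simp
  moreover have "n mod d + 1 \<in> {1..d}" using d by (simp add: Suc_le_eq)
  ultimately show "\<exists>j\<in>{1..d'}. n \<in> range (\<lambda>n. d * n + (j - 1))"
    using \<open>Ld d = Ld d'\<close> by blast
next
  show "separating (Ld d) (lift_sig (\<lambda>j n. d * n + (j - 1))) (enc (0, 0))"
    unfolding separating_def
  proof (intro allI impI)
    fix \<gamma> z' \<mu> \<nu> assume \<gamma>: "set \<gamma> \<subseteq> idx (Ld d)"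
      "enc (0, 0) = walk (lift_sig (\<lambda>j n. d * n + (j - 1))) \<gamma> z'" "\<gamma> \<noteq> []"
    then have "last \<gamma> = 1" using walk_to_digit_zero[of \<gamma> d 0 z'] by simp
    then show "\<not> normal_pair (Ld d) (\<mu> @ \<gamma>) (\<nu> @ \<gamma>)"
      using \<gamma>(3) by (simp add: normal_pair_def)
  qed
next
  fix j
  show "inj (\<lambda>n. d * n + (j - 1))"
    by (rule injI) (use d in \<open>simp only: add_right_cancel, simp\<close>)
qed

theorem corollary8p4:
  fixes A :: alg and p :: real
  assumes "valid_alg A" and "1 \<le> p" and "p \<noteq> 2"
  shows "\<exists>\<rho>. is_rep p A \<rho> \<and> injective_rep p A \<rho> \<and> free_rep p A \<rho> \<and> spatial_rep p A \<rho>"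
proof -
  have p: "0 < p" using assms(2) by simp
  obtain sig level where "branching_system A sig level"
  proof (cases A)
    case (Ld d)
    then have "1 \<le> d" using assms(1) by (simp add: valid_alg_def)
    then show ?thesis using that branching_system_Ld Ld by blast
  qed (use that branching_system_pairing in auto)
  then show ?thesis using branching_system.shift_rep_properties[OF _ p] by blast
qed

end
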